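(* Let $k$ be an algebraically closed field of characteristic $0$, $G$ an algebraic torus and $V$ any finite-dimensional algebraic $G$-module. Then $\mathrm{pol\,ind}(V)=\infty$.
   Context: For $n\in\mathbb N$, $G$ acts diagonally on $V^{\oplus n}$. Polarizations of $f\in k[V]$: $f(\alpha_1v_1+\dots+\alpha_nv_n)=\sum_{(i_1,\dots,i_n)\in\mathbb Z_+^n}\alpha_1^{i_1}\cdots\alpha_n^{i_n}f_{i_1,\dots,i_n}(v_1,\dots,v_n)$; $\mathrm{pol}_nk[V]^G\subseteq k[V^{\oplus n}]^G$ is generated by polarizations of all $f\in k[V]^G$. $\mathcal N_{V^{\oplus n},G}=\{w:F(w)=F(0)\ \forall F\in k[V^{\oplus n}]^G\}$, $\mathcal P_{V^{\oplus n},G}=\{w:h(w)=h(0)\ \forall h\in\mathrm{pol}_nk[V]^G\}$. The polarization index $\mathrm{pol\,ind}(V)$ is the supremum of all $n\in\mathbb N$ with $\mathcal N_{V^{\oplus n},G}=\mathcal P_{V^{\oplus n},G}$. *)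

theory Defs
  imports "HOL-Computational_Algebra.Polynomial" "HOL-Library.Extended_Nat"
begin

definition alg_closed :: "'k::field itself \<Rightarrow> bool" where
  "alg_closed _ \<longleftrightarrow> (\<forall>p :: 'k poly. degree p \<ge> 1 \<longrightarrow> (\<exists>x. poly p x = 0))"

definition polyfun :: "'i set \<Rightarrow> (('i \<Rightarrow> 'k::comm_ring_1) \<Rightarrow> 'k) \<Rightarrow> bool" where
  "polyfun I f \<longleftrightarrow> (\<exists>S c. finite S \<and> (\<forall>e\<in>S. \<forall>i. i \<notin> I \<longrightarrow> e i = (0::nat)) \<and>
      (\<forall>x. f x = (\<Sum>e\<in>S. c e * (\<Prod>i\<in>I. x i ^ e i))))"

text \<open>The algebraic torus (k^*)^r, elements t with t i \<noteq> 0 for i<r (and t i = 1 otherwise);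
  group law is pointwise multiplication, identity is the constant 1.\<close>
definition torus :: "nat \<Rightarrow> (nat \<Rightarrow> 'k::field) set" where
  "torus r = {t. (\<forall>i<r. t i \<noteq> 0) \<and> (\<forall>i\<ge>r. t i = 1)}"

definition torus_char :: "nat \<Rightarrow> (nat \<Rightarrow> int) \<Rightarrow> (nat \<Rightarrow> 'k::field) \<Rightarrow> 'k" where
  "torus_char r a t = (\<Prod>i<r. t i powi a i)"

definition regular_on_torus :: "nat \<Rightarrow> ((nat \<Rightarrow> 'k::field) \<Rightarrow> 'k) \<Rightarrow> bool" where
  "regular_on_torus r g \<longleftrightarrow> (\<exists>S c. finite S \<and> (\<forall>a\<in>S. \<forall>i\<ge>r. a i = 0) \<and>
      (\<forall>t\<in>torus r. g t = (\<Sum>a\<in>S. c a * torus_char r a t)))"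

text \<open>A finite-dimensional algebraic (rational) G-module V = k^m for G = torus r:
  rho t is the m x m matrix of t, entries regular on G, rho a group homomorphism.\<close>
definition rational_rep :: "nat \<Rightarrow> nat \<Rightarrow> ((nat \<Rightarrow> 'k::field) \<Rightarrow> nat \<Rightarrow> nat \<Rightarrow> 'k) \<Rightarrow> bool" where
  "rational_rep r m \<rho> \<longleftrightarrow>
     (\<forall>i<m. \<forall>j<m. regular_on_torus r (\<lambda>t. \<rho> t i j)) \<and>
     (\<forall>i<m. \<forall>j<m. \<rho> (\<lambda>_. 1) i j = (if i = j then 1 else 0)) \<and>
     (\<forall>s\<in>torus r. \<forall>t\<in>torus r. \<forall>i<m. \<forall>j<m.
        \<rho> (\<lambda>l. s l * t l) i j = (\<Sum>l<m. \<rho> s i l * \<rho> t l j))"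

definition act :: "nat \<Rightarrow> ((nat \<Rightarrow> 'k::field) \<Rightarrow> nat \<Rightarrow> nat \<Rightarrow> 'k) \<Rightarrow> (nat \<Rightarrow> 'k) \<Rightarrow> (nat \<Rightarrow> 'k) \<Rightarrow> (nat \<Rightarrow> 'k)" where
  "act m \<rho> t v = (\<lambda>i. \<Sum>j<m. \<rho> t i j * v j)"

text \<open>V^{\<oplus>n}: points w :: nat \<times> nat => k, w (p,i) = i-th coordinate of the p-th summand.\<close>
definition dsum_index :: "nat \<Rightarrow> nat \<Rightarrow> (nat \<times> nat) set" where
  "dsum_index n m = {..<n} \<times> {..<m}"

definition diag_act :: "nat \<Rightarrow> ((nat \<Rightarrow> 'k::field) \<Rightarrow> nat \<Rightarrow> nat \<Rightarrow> 'k) \<Rightarrow> (nat \<Rightarrow> 'k) \<Rightarrow> (nat \<times> nat \<Rightarrow> 'k) \<Rightarrow> (nat \<times> nat \<Rightarrow> 'k)" where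
  "diag_act m \<rho> t w = (\<lambda>(p, i). \<Sum>j<m. \<rho> t i j * w (p, j))"

definition invariants_V :: "nat \<Rightarrow> nat \<Rightarrow> ((nat \<Rightarrow> 'k::field) \<Rightarrow> nat \<Rightarrow> nat \<Rightarrow> 'k) \<Rightarrow> ((nat \<Rightarrow> 'k) \<Rightarrow> 'k) set" where
  "invariants_V r m \<rho> = {f. polyfun {..<m} f \<and> (\<forall>t\<in>torus r. \<forall>v. f (act m \<rho> t v) = f v)}"

definition invariants :: "nat \<Rightarrow> nat \<Rightarrow> ((nat \<Rightarrow> 'k::field) \<Rightarrow> nat \<Rightarrow> nat \<Rightarrow> 'k) \<Rightarrow> nat \<Rightarrow> ((nat \<times> nat \<Rightarrow> 'k) \<Rightarrow> 'k) set" where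
  "invariants r m \<rho> n = {F. polyfun (dsum_index n m) F \<and> (\<forall>t\<in>torus r. \<forall>w. F (diag_act m \<rho> t w) = F w)}"

text \<open>Polarizations: f(\<alpha>_1 v_1 + ... + \<alpha>_n v_n) = \<Sum>_e \<alpha>^e f_e(v_1,...,v_n);
  pol_coeff m n f w is the (unique, finitely supported) coefficient family for fixed w.\<close>
definition pol_coeff :: "nat \<Rightarrow> nat \<Rightarrow> ((nat \<Rightarrow> 'k::field) \<Rightarrow> 'k) \<Rightarrow> (nat \<times> nat \<Rightarrow> 'k) \<Rightarrow> (nat \<Rightarrow> nat) \<Rightarrow> 'k" where
  "pol_coeff m n f w = (THE c. finite {e. c e \<noteq> 0} \<and> (\<forall>e. c e \<noteq> 0 \<longrightarrow> (\<forall>j\<ge>n. e j = 0)) \<and>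
      (\<forall>\<alpha>::nat \<Rightarrow> 'k. f (\<lambda>i. \<Sum>j<n. \<alpha> j * w (j, i)) =
                  (\<Sum>e\<in>{e. c e \<noteq> 0}. c e * (\<Prod>j<n. \<alpha> j ^ e j))))"

definition polarizations :: "nat \<Rightarrow> nat \<Rightarrow> ((nat \<Rightarrow> 'k::field) \<Rightarrow> nat \<Rightarrow> nat \<Rightarrow> 'k) \<Rightarrow> nat \<Rightarrow> ((nat \<times> nat \<Rightarrow> 'k) \<Rightarrow> 'k) set" where
  "polarizations r m \<rho> n =
     {(\<lambda>w. pol_coeff m n f w e) | f e. f \<in> invariants_V r m \<rho> \<and> (\<forall>j\<ge>n. e j = 0)}"

inductive_set gen_alg :: "('x \<Rightarrow> 'k::field) set \<Rightarrow> ('x \<Rightarrow> 'k) set" for S where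
  gen: "h \<in> S \<Longrightarrow> h \<in> gen_alg S"
| const: "(\<lambda>_. c) \<in> gen_alg S"
| add: "g \<in> gen_alg S \<Longrightarrow> h \<in> gen_alg S \<Longrightarrow> (\<lambda>x. g x + h x) \<in> gen_alg S"
| mult: "g \<in> gen_alg S \<Longrightarrow> h \<in> gen_alg S \<Longrightarrow> (\<lambda>x. g x * h x) \<in> gen_alg S"

definition dsum_points :: "nat \<Rightarrow> nat \<Rightarrow> (nat \<times> nat \<Rightarrow> 'k::field) set" where
  "dsum_points n m = {w. \<forall>x. x \<notin> dsum_index n m \<longrightarrow> w x = 0}"

definition nullcone :: "nat \<Rightarrow> nat \<Rightarrow> ((nat \<Rightarrow> 'k::field) \<Rightarrow> nat \<Rightarrow> nat \<Rightarrow> 'k) \<Rightarrow> nat \<Rightarrow> (nat \<times> nat \<Rightarrow> 'k) set" where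
  "nullcone r m \<rho> n = {w \<in> dsum_points n m. \<forall>F\<in>invariants r m \<rho> n. F w = F (\<lambda>_. 0)}"

definition pol_nullcone :: "nat \<Rightarrow> nat \<Rightarrow> ((nat \<Rightarrow> 'k::field) \<Rightarrow> nat \<Rightarrow> nat \<Rightarrow> 'k) \<Rightarrow> nat \<Rightarrow> (nat \<times> nat \<Rightarrow> 'k) set" where
  "pol_nullcone r m \<rho> n =
     {w \<in> dsum_points n m. \<forall>h\<in>gen_alg (polarizations r m \<rho> n). h w = h (\<lambda>_. 0)}"

definition pol_ind :: "nat \<Rightarrow> nat \<Rightarrow> ((nat \<Rightarrow> 'k::field) \<Rightarrow> nat \<Rightarrow> nat \<Rightarrow> 'k) \<Rightarrow> enat" where
  "pol_ind r m \<rho> = Sup {enat n | n. n \<ge> 1 \<and> nullcone r m \<rho> n = pol_nullcone r m \<rho> n}"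

end

theory Submission
  imports Defs
begin

(* The torus acts diagonalizably, so V splits into weight spaces and t acts on the weight-a
   component of a point w of V^n by the character a. Comparing the character expansions of
   F (t w) = F w shows: if some invariant F has F w <> F 0, the weights occurring in w satisfy
   a nontrivial relation sum_a e_a a = 0 with natural coefficients e_a. Conversely such a
   relation gives an invariant f = prod_a l_a ^ e_a of V alone, with l_a a linear form of
   weight a not vanishing on some summand of w; then f (sum_j s^j w_j) is a nonzero polynomial
   in s, so some polarization of f separates w from 0. Hence the two nullcones agree for every
   n. *)

lemma laurent_sum_const_coeffs:
  fixes c :: "'a \<Rightarrow> 'k::field_char_0" and \<kappa> :: "'a \<Rightarrow> int"
  assumes fin: "finite E" and const: "\<And>s. s \<noteq> 0 \<Longrightarrow> (\<Sum>e\<in>E. c e * s powi \<kappa> e) = K"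
  shows "(\<Sum>e\<in>{e\<in>E. \<kappa> e = k}. c e) = (if k = 0 then K else 0)"
proof -
  define N where "N = nat (- k) + (\<Sum>e\<in>E. nat (- \<kappa> e))"
  have shift: "\<kappa> e + int N \<ge> 0" if "e \<in> E" for e
    using member_le_sum[OF that, of "\<lambda>e. nat (- \<kappa> e)"] fin unfolding N_def by linarith
  define p where "p = (\<Sum>e\<in>E. monom (c e) (nat (\<kappa> e + int N))) - monom K N"
  have "poly p s = 0" if "s \<noteq> 0" for s
  proof -
    have "s ^ nat (\<kappa> e + int N) = s powi \<kappa> e * s ^ N" if "e \<in> E" for e
      using shift[OF that] \<open>s \<noteq> 0\<close> by (simp add: power_int_add flip: power_int_of_nat)
    then have "poly p s = (\<Sum>e\<in>E. c e * s powi \<kappa> e * s ^ N) - K * s ^ N"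
      by (simp add: p_def poly_sum poly_monom mult.assoc)
    also have "\<dots> = ((\<Sum>e\<in>E. c e * s powi \<kappa> e) - K) * s ^ N"
      by (simp add: sum_distrib_right left_diff_distrib)
    finally have "poly p s = ((\<Sum>e\<in>E. c e * s powi \<kappa> e) - K) * s ^ N" .
    then show ?thesis using const[OF that] by simp
  qed
  then have "poly (pCons 0 p) s = 0" for s by (cases "s = 0") auto
  then have "p = 0" using poly_all_0_iff_0[of "pCons 0 p"] by simp
  have "k + int N \<ge> 0" unfolding N_def by linarith
  then have "coeff p (nat (k + int N)) = (\<Sum>e\<in>E. if \<kappa> e = k then c e else 0) - (if k = 0 then K else 0)"
    unfolding p_def using shift by (auto simp: coeff_sum coeff_monom eq_nat_nat_iff intro!: sum.cong)
  then show ?thesis using \<open>p = 0\<close> fin by (simp add: sum.inter_filter)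
qed

lemma poly_prod_power_nonzero_somewhere:
  fixes \<beta> :: "'a \<Rightarrow> nat \<Rightarrow> 'k::field_char_0"
  assumes "finite T" and "\<And>a. a \<in> T \<Longrightarrow> \<exists>j<n. \<beta> a j \<noteq> 0"
  obtains s where "(\<Prod>a\<in>T. (\<Sum>j<n. \<beta> a j * s ^ j) ^ e a) \<noteq> 0"
proof -
  define q where "q = (\<Prod>a\<in>T. (\<Sum>j<n. monom (\<beta> a j) j) ^ e a)"
  have "(\<Sum>j<n. monom (\<beta> a j) j) \<noteq> 0" if "a \<in> T" for a
  proof
    assume "(\<Sum>j<n. monom (\<beta> a j) j) = 0"
    moreover have "coeff (\<Sum>j<n. monom (\<beta> a j) j) j = \<beta> a j" if "j < n" for j
      using that by (simp add: coeff_sum coeff_monom)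
    ultimately have "\<beta> a j = 0" if "j < n" for j
      using that by fastforce
    then show False using assms(2)[OF \<open>a \<in> T\<close>] by blast
  qed
  then have "q \<noteq> 0" unfolding q_def using assms(1) by (simp add: prod_zero_iff)
  then obtain s where "poly q s \<noteq> 0" using poly_all_0_iff_0 by blast
  then show ?thesis
    by (intro that[of s]) (simp add: q_def poly_prod poly_sum poly_monom)
qed

lemma one_in_torus: "(\<lambda>_. 1) \<in> torus r"
  by (simp add: torus_def)

lemma torus_mult: "s \<in> torus r \<Longrightarrow> t \<in> torus r \<Longrightarrow> (\<lambda>l. s l * t l) \<in> torus r"
  by (simp add: torus_def)

lemma torus_char_mult:
  "torus_char r a (\<lambda>l. s l * t l) = torus_char r a s * torus_char r a (t :: nat \<Rightarrow> 'k::field)"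
  by (simp add: torus_char_def power_int_mult_distrib prod.distrib)

lemma torus_char_Suc_upd:
  "torus_char (Suc r) a (t(r := s)) = torus_char r (a(r := 0)) t * s powi a r"
  unfolding torus_char_def by (auto intro!: prod.cong)

lemma torus_char_prod_power:
  fixes t :: "nat \<Rightarrow> 'k::field"
  assumes t: "t \<in> torus r" and fin: "finite T"
  shows "(\<Prod>b\<in>T. torus_char r b t ^ e b) = torus_char r (\<lambda>i. \<Sum>b\<in>T. int (e b) * b i) t"
proof -
  have "t i powi (\<Sum>b\<in>T. int (e b) * b i) = (\<Prod>b\<in>T. (t i powi b i) ^ e b)" if "i < r" for i
  proof -
    have "t i \<noteq> 0" using t that by (simp add: torus_def)
    from fin show ?thesis
      by (induction T rule: finite_induct)
        (simp_all add: \<open>t i \<noteq> 0\<close> power_int_add power_int_mult mult.commute)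
  qed
  then show ?thesis
    by (simp add: torus_char_def prod_power_distrib prod.swap[of _ T])
qed

lemma torus_char_sum_const_coeffs:
  fixes c :: "'a \<Rightarrow> 'k::field_char_0" and \<mu> :: "'a \<Rightarrow> nat \<Rightarrow> int"
  assumes "finite E" and "\<And>e i. e \<in> E \<Longrightarrow> r \<le> i \<Longrightarrow> \<mu> e i = 0"
    and "\<And>t. t \<in> torus r \<Longrightarrow> (\<Sum>e\<in>E. c e * torus_char r (\<mu> e) t) = K"
  shows "(\<Sum>e\<in>{e\<in>E. \<mu> e = \<nu>}. c e) = (if \<nu> = (\<lambda>_. 0) then K else 0)"
  using assms
proof (induction r arbitrary: E c \<mu> K \<nu>)
  case 0
  then have "\<mu> e = (\<lambda>_. 0)" if "e \<in> E" for e
    using that by auto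
  moreover have "(\<Sum>e\<in>E. c e) = K"
    using "0.prems"(3)[OF one_in_torus] by (simp add: torus_char_def)
  ultimately show ?case
    by (cases "\<nu> = (\<lambda>_. 0)") (auto intro!: sum.neutral arg_cong[of _ _ "sum c"])
next
  case (Suc r)
  define \<mu>' where "\<mu>' e = (\<mu> e)(r := 0)" for e
  define K' where "K' k = (if k = 0 then K else 0)" for k :: int
  have last: "(\<Sum>e\<in>{e\<in>E. \<mu> e r = k}. c e * torus_char r (\<mu>' e) t') = K' k"
    if t': "t' \<in> torus r" for t' k
    unfolding K'_def
  proof (rule laurent_sum_const_coeffs[OF Suc.prems(1)])
    fix s :: 'k assume "s \<noteq> 0"
    then have t: "t'(r := s) \<in> torus (Suc r)"
      using t' by (auto simp: torus_def less_Suc_eq)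
    show "(\<Sum>e\<in>E. c e * torus_char r (\<mu>' e) t' * s powi \<mu> e r) = K"
      using Suc.prems(3)[OF t] unfolding torus_char_Suc_upd \<mu>'_def by (simp add: mult.assoc)
  qed
  have "(\<Sum>e\<in>{e\<in>{e\<in>E. \<mu> e r = \<nu> r}. \<mu>' e = \<nu>(r := 0)}. c e) =
      (if \<nu>(r := 0) = (\<lambda>_. 0) then K' (\<nu> r) else 0)"
    using Suc.prems(1,2) by (intro Suc.IH last) (auto simp: \<mu>'_def)
  moreover have "{e\<in>{e\<in>E. \<mu> e r = \<nu> r}. \<mu>' e = \<nu>(r := 0)} = {e\<in>E. \<mu> e = \<nu>}"
    by (auto simp: \<mu>'_def fun_eq_iff)
  moreover have "(\<nu>(r := 0) = (\<lambda>_. 0) \<and> \<nu> r = 0) \<longleftrightarrow> \<nu> = (\<lambda>_. 0)"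
    by (auto simp: fun_eq_iff)
  ultimately show ?case
    unfolding K'_def by (auto split: if_splits)
qed

lemma torus_chars_independent:
  fixes c :: "(nat \<Rightarrow> int) \<Rightarrow> 'k::field_char_0"
  assumes "finite S" and "\<And>a i. a \<in> S \<Longrightarrow> r \<le> i \<Longrightarrow> a i = 0"
    and "\<And>t. t \<in> torus r \<Longrightarrow> (\<Sum>a\<in>S. c a * torus_char r a t) = 0" and "a \<in> S"
  shows "c a = 0"
proof -
  have "{b\<in>S. b = a} = {a}" using \<open>a \<in> S\<close> by auto
  then show ?thesis
    using torus_char_sum_const_coeffs[of S r id c 0 a] assms by simp
qed

lemma monomials_independent:
  fixes d :: "(nat \<Rightarrow> nat) \<Rightarrow> 'k::field_char_0"
  assumes "finite U" and "\<And>e j. e \<in> U \<Longrightarrow> n \<le> j \<Longrightarrow> e j = 0"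
    and "\<And>\<alpha>. (\<Sum>e\<in>U. d e * (\<Prod>j<n. \<alpha> j ^ e j)) = 0" and "e \<in> U"
  shows "d e = 0"
proof -
  have "(\<Sum>e'\<in>{e'\<in>U. (\<lambda>j. int (e' j)) = (\<lambda>j. int (e j))}. d e') =
      (if (\<lambda>j. int (e j)) = (\<lambda>_. 0) then 0 else 0)"
    using assms(1,2,3) by (intro torus_char_sum_const_coeffs) (auto simp: torus_char_def)
  moreover have "{e'\<in>U. (\<lambda>j. int (e' j)) = (\<lambda>j. int (e j))} = {e}"
    using \<open>e \<in> U\<close> by (auto simp: fun_eq_iff)
  ultimately show ?thesis by simp
qed

lemma regular_on_torus_common_support:
  fixes g :: "'x \<Rightarrow> (nat \<Rightarrow> 'k::field) \<Rightarrow> 'k"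
  assumes "finite X" and "\<And>x. x \<in> X \<Longrightarrow> regular_on_torus r (g x)"
  obtains S c where "finite S" and "\<And>a i. a \<in> S \<Longrightarrow> r \<le> i \<Longrightarrow> a i = 0"
    and "\<And>x t. x \<in> X \<Longrightarrow> t \<in> torus r \<Longrightarrow> g x t = (\<Sum>a\<in>S. c x a * torus_char r a t)"
proof -
  have "\<forall>x\<in>X. \<exists>S c. finite S \<and> (\<forall>a\<in>S. \<forall>i\<ge>r. a i = 0) \<and>
      (\<forall>t\<in>torus r. g x t = (\<Sum>a\<in>S. c a * torus_char r a (t :: nat \<Rightarrow> 'k)))"
    using assms(2) unfolding regular_on_torus_def by blast
  then obtain SS cc where SS: "\<And>x. x \<in> X \<Longrightarrow> finite (SS x)"
    "\<And>x. x \<in> X \<Longrightarrow> \<forall>a\<in>SS x. \<forall>i\<ge>r. a i = 0"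
    "\<And>x. x \<in> X \<Longrightarrow> \<forall>t\<in>torus r. g x t = (\<Sum>a\<in>SS x. cc x a * torus_char r a t)"
    by metis
  define c where "c x a = (if a \<in> SS x then cc x a else 0)" for x a
  show ?thesis
  proof
    show "finite (\<Union>x\<in>X. SS x)" using assms(1) SS(1) by blast
    show "a i = 0" if "a \<in> (\<Union>x\<in>X. SS x)" "r \<le> i" for a i
      using SS(2) that by blast
    fix x and t :: "nat \<Rightarrow> 'k" assume x: "x \<in> X" and t: "t \<in> torus r"
    have "g x t = (\<Sum>a\<in>SS x. cc x a * torus_char r a t)" using SS(3) x t by blast
    also have "\<dots> = (\<Sum>a\<in>(\<Union>x\<in>X. SS x). c x a * torus_char r a t)"
      using assms(1) SS(1) x by (intro sum.mono_neutral_cong_left) (auto simp: c_def)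
    finally show "g x t = (\<Sum>a\<in>(\<Union>x\<in>X. SS x). c x a * torus_char r a t)" .
  qed
qed

lemma polyfun_cong:
  assumes "polyfun I f" "\<And>i. i \<in> I \<Longrightarrow> x i = y i"
  shows "f x = f y"
  using assms unfolding polyfun_def by auto

lemma polyfun_monom:
  assumes "\<And>i. i \<notin> I \<Longrightarrow> e i = 0"
  shows "polyfun I (\<lambda>x. (a::'k::comm_ring_1) * (\<Prod>i\<in>I. x i ^ e i))"
  unfolding polyfun_def using assms by (intro exI[of _ "{e}"] exI[of _ "\<lambda>_. a"]) auto

lemma polyfun_const: "polyfun I (\<lambda>x. (a::'k::comm_ring_1))"
  using polyfun_monom[of I "\<lambda>_. 0" a] by simp

lemma polyfun_var:
  assumes "finite I" "j \<in> I"
  shows "polyfun I (\<lambda>x::'i \<Rightarrow> 'k::comm_ring_1. x j)"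
proof -
  have "polyfun I (\<lambda>x::'i \<Rightarrow> 'k. 1 * (\<Prod>i\<in>I. x i ^ (if i = j then 1 else 0)))"
    by (rule polyfun_monom) (use assms(2) in auto)
  moreover have "(\<Prod>i\<in>I. x i ^ (if i = j then 1 else 0)) = x j" for x :: "'i \<Rightarrow> 'k"
    using assms by (simp add: if_distrib prod.If_cases Int_absorb1)
  ultimately show ?thesis by simp
qed

lemma polyfun_add:
  fixes f g :: "('i \<Rightarrow> 'k::comm_ring_1) \<Rightarrow> 'k"
  assumes "polyfun I f" "polyfun I g"
  shows "polyfun I (\<lambda>x. f x + g x)"
proof -
  obtain S1 c1 where 1: "finite S1" "\<forall>e\<in>S1. \<forall>i. i \<notin> I \<longrightarrow> e i = 0"
    "\<forall>x. f x = (\<Sum>e\<in>S1. c1 e * (\<Prod>i\<in>I. x i ^ e i))"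
    using assms(1) unfolding polyfun_def by blast
  obtain S2 c2 where 2: "finite S2" "\<forall>e\<in>S2. \<forall>i. i \<notin> I \<longrightarrow> e i = 0"
    "\<forall>x. g x = (\<Sum>e\<in>S2. c2 e * (\<Prod>i\<in>I. x i ^ e i))"
    using assms(2) unfolding polyfun_def by blast
  define c where "c e = (if e \<in> S1 then c1 e else 0) + (if e \<in> S2 then c2 e else 0)" for e
  have "(\<Sum>e\<in>S1 \<union> S2. c e * (\<Prod>i\<in>I. x i ^ e i)) =
      (\<Sum>e\<in>S1 \<union> S2. if e \<in> S1 then c1 e * (\<Prod>i\<in>I. x i ^ e i) else 0) +
      (\<Sum>e\<in>S1 \<union> S2. if e \<in> S2 then c2 e * (\<Prod>i\<in>I. x i ^ e i) else 0)" for x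
    unfolding sum.distrib[symmetric] by (rule sum.cong) (auto simp: c_def distrib_right)
  then have "f x + g x = (\<Sum>e\<in>S1 \<union> S2. c e * (\<Prod>i\<in>I. x i ^ e i))" for x
    using 1 2 by (simp add: sum.inter_restrict[OF finite_UnI[OF 1(1) 2(1)], symmetric] Un_Int_eq)
  then show ?thesis
    unfolding polyfun_def using 1 2 by (intro exI[of _ "S1 \<union> S2"] exI[of _ c]) auto
qed

lemma polyfun_sum:
  fixes f :: "'a \<Rightarrow> ('i \<Rightarrow> 'k::comm_ring_1) \<Rightarrow> 'k"
  assumes "\<And>a. a \<in> A \<Longrightarrow> polyfun I (f a)"
  shows "polyfun I (\<lambda>x. \<Sum>a\<in>A. f a x)"
proof (cases "finite A")
  case True
  then show ?thesis using assms
    by (induction A rule: finite_induct) (simp_all add: polyfun_const polyfun_add)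
qed (simp add: polyfun_const)

lemma polyfun_mult:
  fixes f g :: "('i \<Rightarrow> 'k::comm_ring_1) \<Rightarrow> 'k"
  assumes "polyfun I f" "polyfun I g"
  shows "polyfun I (\<lambda>x. f x * g x)"
proof -
  obtain S1 c1 where 1: "finite S1" "\<forall>e\<in>S1. \<forall>i. i \<notin> I \<longrightarrow> e i = 0"
    "\<forall>x. f x = (\<Sum>e\<in>S1. c1 e * (\<Prod>i\<in>I. x i ^ e i))"
    using assms(1) unfolding polyfun_def by blast
  obtain S2 c2 where 2: "finite S2" "\<forall>e\<in>S2. \<forall>i. i \<notin> I \<longrightarrow> e i = 0"
    "\<forall>x. g x = (\<Sum>e\<in>S2. c2 e * (\<Prod>i\<in>I. x i ^ e i))"
    using assms(2) unfolding polyfun_def by blast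
  have "f x * g x = (\<Sum>e1\<in>S1. \<Sum>e2\<in>S2. c1 e1 * c2 e2 * (\<Prod>i\<in>I. x i ^ (e1 i + e2 i)))" for x
    using 1(3) 2(3)
    by (simp add: sum_product power_add prod.distrib algebra_simps)
  moreover have "polyfun I (\<lambda>x. \<Sum>e1\<in>S1. \<Sum>e2\<in>S2. c1 e1 * c2 e2 * (\<Prod>i\<in>I. x i ^ (e1 i + e2 i)))"
    using 1(2) 2(2) by (intro polyfun_sum polyfun_monom) auto
  ultimately show ?thesis by simp
qed

lemma polyfun_prod:
  fixes f :: "'a \<Rightarrow> ('i \<Rightarrow> 'k::comm_ring_1) \<Rightarrow> 'k"
  assumes "\<And>a. a \<in> A \<Longrightarrow> polyfun I (f a)"
  shows "polyfun I (\<lambda>x. \<Prod>a\<in>A. f a x)"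
proof (cases "finite A")
  case True
  then show ?thesis using assms
    by (induction A rule: finite_induct) (simp_all add: polyfun_const polyfun_mult)
qed (simp add: polyfun_const)

lemma polyfun_power:
  fixes f :: "('i \<Rightarrow> 'k::comm_ring_1) \<Rightarrow> 'k"
  assumes "polyfun I f"
  shows "polyfun I (\<lambda>x. f x ^ n)"
  using polyfun_prod[of "{..<n}" I "\<lambda>_. f"] assms by simp

lemma polyfun_compose:
  fixes F :: "('j \<Rightarrow> 'k::comm_ring_1) \<Rightarrow> 'k" and g :: "'j \<Rightarrow> ('i \<Rightarrow> 'k) \<Rightarrow> 'k"
  assumes "polyfun J F" "\<And>j. j \<in> J \<Longrightarrow> polyfun I (g j)"
  shows "polyfun I (\<lambda>x. F (\<lambda>j. g j x))"
proof -
  obtain S c where "\<forall>y. F y = (\<Sum>e\<in>S. c e * (\<Prod>j\<in>J. y j ^ e j))"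
    using assms(1) unfolding polyfun_def by blast
  moreover have "polyfun I (\<lambda>x. \<Sum>e\<in>S. c e * (\<Prod>j\<in>J. g j x ^ e j))"
    by (intro polyfun_sum polyfun_mult polyfun_const polyfun_prod polyfun_power assms(2))
  ultimately show ?thesis by simp
qed

lemma polyfun_at_zero:
  fixes f :: "('i \<Rightarrow> 'k::comm_ring_1) \<Rightarrow> 'k"
  assumes "finite I" and "\<And>x. f x = (\<Sum>e\<in>S. c e * (\<Prod>i\<in>I. x i ^ e i))" and "finite S"
  shows "f (\<lambda>_. 0) = (\<Sum>e\<in>{e\<in>S. \<forall>i\<in>I. e i = 0}. c e)"
proof -
  have "(\<Prod>i\<in>I. (0::'k) ^ e i) = (if \<forall>i\<in>I. e i = 0 then 1 else 0)" for e
    using \<open>finite I\<close> by (auto simp: zero_power intro!: prod_zero bexI)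
  then show ?thesis
    using assms(2,3) by (auto simp: sum.inter_filter intro!: sum.cong)
qed

abbreviation lin_comb :: "nat \<Rightarrow> (nat \<times> nat \<Rightarrow> 'k::comm_ring_1) \<Rightarrow> (nat \<Rightarrow> 'k) \<Rightarrow> nat \<Rightarrow> 'k" where
  "lin_comb n w \<alpha> \<equiv> (\<lambda>i. \<Sum>j<n. \<alpha> j * w (j, i))"

definition pol_expansion ::
    "nat \<Rightarrow> ((nat \<Rightarrow> 'k::field) \<Rightarrow> 'k) \<Rightarrow> (nat \<times> nat \<Rightarrow> 'k) \<Rightarrow> ((nat \<Rightarrow> nat) \<Rightarrow> 'k) \<Rightarrow> bool" where
  "pol_expansion n f w c \<longleftrightarrow> finite {e. c e \<noteq> 0} \<and> (\<forall>e. c e \<noteq> 0 \<longrightarrow> (\<forall>j\<ge>n. e j = 0)) \<and>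
      (\<forall>\<alpha>. f (lin_comb n w \<alpha>) = (\<Sum>e\<in>{e. c e \<noteq> 0}. c e * (\<Prod>j<n. \<alpha> j ^ e j)))"

lemma pol_coeff_eq_The: "pol_coeff m n f w = (THE c. pol_expansion n f w c)"
  unfolding pol_coeff_def pol_expansion_def ..

lemma pol_expansion_unique:
  fixes f :: "(nat \<Rightarrow> 'k::field_char_0) \<Rightarrow> 'k"
  assumes c: "pol_expansion n f w c" and c': "pol_expansion n f w c'"
  shows "c = c'"
proof -
  define U where "U = {e. c e \<noteq> 0} \<union> {e. c' e \<noteq> 0}"
  have U: "finite U" using c c' unfolding U_def pol_expansion_def by simp
  have expand_U: "f (lin_comb n w \<alpha>) = (\<Sum>e\<in>U. d e * (\<Prod>j<n. \<alpha> j ^ e j))"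
    if d: "pol_expansion n f w d" and sub: "{e. d e \<noteq> 0} \<subseteq> U" for d \<alpha>
  proof -
    have "f (lin_comb n w \<alpha>) = (\<Sum>e\<in>{e. d e \<noteq> 0}. d e * (\<Prod>j<n. \<alpha> j ^ e j))"
      using d unfolding pol_expansion_def by blast
    also have "\<dots> = (\<Sum>e\<in>U. d e * (\<Prod>j<n. \<alpha> j ^ e j))"
      by (rule sum.mono_neutral_left[OF U sub]) auto
    finally show ?thesis .
  qed
  have "e j = 0" if "e \<in> U" "n \<le> j" for e j
    using c c' that unfolding U_def pol_expansion_def by blast
  moreover have "{e. c e \<noteq> 0} \<subseteq> U" "{e. c' e \<noteq> 0} \<subseteq> U" unfolding U_def by auto
  then have "(\<Sum>e\<in>U. (c e - c' e) * (\<Prod>j<n. \<alpha> j ^ e j)) = 0" for \<alpha>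
    using expand_U[OF c, of \<alpha>] expand_U[OF c', of \<alpha>]
    by (simp add: left_diff_distrib sum_subtractf)
  ultimately have "c e - c' e = 0" if "e \<in> U" for e
    by (rule monomials_independent[OF U _ _ that])
  then have "c e = c' e" for e by (cases "e \<in> U") (auto simp: U_def)
  then show ?thesis ..
qed

lemma pol_expansion_exists:
  fixes f :: "(nat \<Rightarrow> 'k::field_char_0) \<Rightarrow> 'k"
  assumes "polyfun {..<m} f"
  shows "\<exists>c. pol_expansion n f w c"
proof -
  have "polyfun {..<n} (\<lambda>\<alpha>. f (lin_comb n w \<alpha>))"
    by (rule polyfun_compose[OF assms])
      (intro polyfun_sum polyfun_mult polyfun_var polyfun_const; simp)
  then obtain S c where S: "finite S" "\<forall>e\<in>S. \<forall>j. j \<notin> {..<n} \<longrightarrow> e j = 0"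
    "\<forall>\<alpha>. f (lin_comb n w \<alpha>) = (\<Sum>e\<in>S. c e * (\<Prod>j<n. \<alpha> j ^ e j))"
    unfolding polyfun_def by blast
  define c' where "c' e = (if e \<in> S then c e else 0)" for e
  have sub: "{e. c' e \<noteq> 0} \<subseteq> S" by (auto simp: c'_def split: if_splits)
  have "(\<Sum>e\<in>S. c e * (\<Prod>j<n. \<alpha> j ^ e j)) = (\<Sum>e\<in>{e. c' e \<noteq> 0}. c' e * (\<Prod>j<n. \<alpha> j ^ e j))" for \<alpha>
    by (rule sum.mono_neutral_cong_right[OF S(1) sub]) (auto simp: c'_def)
  moreover have "finite {e. c' e \<noteq> 0}" using finite_subset[OF sub S(1)] .
  moreover have "\<forall>e. c' e \<noteq> 0 \<longrightarrow> (\<forall>j\<ge>n. e j = 0)" using S(2) sub by auto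
  ultimately have "pol_expansion n f w c'"
    using S(3) unfolding pol_expansion_def by simp
  then show ?thesis by blast
qed

lemma pol_coeff_expansion:
  fixes f :: "(nat \<Rightarrow> 'k::field_char_0) \<Rightarrow> 'k"
  assumes "polyfun {..<m} f"
  shows "pol_expansion n f w (pol_coeff m n f w)"
proof -
  obtain c where c: "pol_expansion n f w c" using pol_expansion_exists[OF assms] ..
  show ?thesis unfolding pol_coeff_eq_The
    by (rule theI[where P = "pol_expansion n f w", OF c]) (rule pol_expansion_unique[OF _ c])
qed

lemma pol_coeff_eq_iff:
  fixes f :: "(nat \<Rightarrow> 'k::field_char_0) \<Rightarrow> 'k"
  assumes "polyfun {..<m} f"
  shows "pol_coeff m n f w = pol_coeff m n f w' \<longleftrightarrow> (\<forall>\<alpha>. f (lin_comb n w \<alpha>) = f (lin_comb n w' \<alpha>))"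
proof
  assume eq: "pol_coeff m n f w = pol_coeff m n f w'"
  show "\<forall>\<alpha>. f (lin_comb n w \<alpha>) = f (lin_comb n w' \<alpha>)"
    using pol_coeff_expansion[OF assms, of n w] pol_coeff_expansion[OF assms, of n w']
    unfolding pol_expansion_def eq by simp
next
  assume "\<forall>\<alpha>. f (lin_comb n w \<alpha>) = f (lin_comb n w' \<alpha>)"
  then have "pol_expansion n f w = pol_expansion n f w'"
    unfolding pol_expansion_def by (intro ext) simp
  then show "pol_coeff m n f w = pol_coeff m n f w'"
    unfolding pol_coeff_eq_The by simp
qed

lemma pol_coeff_eq_0:
  fixes f :: "(nat \<Rightarrow> 'k::field_char_0) \<Rightarrow> 'k"
  assumes "polyfun {..<m} f" and "n \<le> j" "e j \<noteq> 0"
  shows "pol_coeff m n f w e = 0"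
  using pol_coeff_expansion[OF assms(1), of n w] assms(2,3) unfolding pol_expansion_def by auto

lemma pol_nullcone_iff:
  fixes \<rho> :: "(nat \<Rightarrow> 'k::field_char_0) \<Rightarrow> nat \<Rightarrow> nat \<Rightarrow> 'k"
  shows "w \<in> pol_nullcone r m \<rho> n \<longleftrightarrow> w \<in> dsum_points n m \<and>
    (\<forall>f\<in>invariants_V r m \<rho>. \<forall>\<alpha>. f (lin_comb n w \<alpha>) = f (\<lambda>_. 0))"
proof -
  have "(\<forall>h\<in>gen_alg (polarizations r m \<rho> n). h w = h (\<lambda>_. 0)) \<longleftrightarrow>
      (\<forall>f\<in>invariants_V r m \<rho>. pol_coeff m n f w = pol_coeff m n f (\<lambda>_. 0))"
  proof (intro iffI ballI)
    fix f assume f: "f \<in> invariants_V r m \<rho>"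
      and gen: "\<forall>h\<in>gen_alg (polarizations r m \<rho> n). h w = h (\<lambda>_. 0)"
    have "pol_coeff m n f w e = pol_coeff m n f (\<lambda>_. 0) e" for e
    proof (cases "\<forall>j\<ge>n. e j = 0")
      case True
      then have "(\<lambda>w. pol_coeff m n f w e) \<in> gen_alg (polarizations r m \<rho> n)"
        using f unfolding polarizations_def by (intro gen_alg.gen) blast
      then show ?thesis using gen by fast
    next
      case False
      with f show ?thesis by (auto simp: invariants_V_def pol_coeff_eq_0)
    qed
    then show "pol_coeff m n f w = pol_coeff m n f (\<lambda>_. 0)" ..
  next
    fix h assume "h \<in> gen_alg (polarizations r m \<rho> n)"
      and pc: "\<forall>f\<in>invariants_V r m \<rho>. pol_coeff m n f w = pol_coeff m n f (\<lambda>_. 0)"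
    then show "h w = h (\<lambda>_. 0)"
    proof induction
      case (gen h)
      then show ?case using pc unfolding polarizations_def by force
    qed simp_all
  qed
  moreover have "pol_coeff m n f w = pol_coeff m n f (\<lambda>_. 0) \<longleftrightarrow> (\<forall>\<alpha>. f (lin_comb n w \<alpha>) = f (\<lambda>_. 0))"
    if "f \<in> invariants_V r m \<rho>" for f
    using pol_coeff_eq_iff[of m f n w "\<lambda>_. 0"] that by (simp add: invariants_V_def)
  ultimately show ?thesis
    unfolding pol_nullcone_def by simp
qed

lemma diag_act_lin_comb:
  "lin_comb n (diag_act m \<rho> t w) \<alpha> = act m \<rho> t (lin_comb n w \<alpha>)"
proof
  fix i
  have "(\<Sum>j<n. \<alpha> j * diag_act m \<rho> t w (j, i)) = (\<Sum>j<n. \<Sum>l<m. \<rho> t i l * (\<alpha> j * w (j, l)))"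
    by (simp add: diag_act_def sum_distrib_left algebra_simps)
  also have "\<dots> = act m \<rho> t (lin_comb n w \<alpha>) i"
    by (subst sum.swap) (simp add: act_def sum_distrib_left)
  finally show "lin_comb n (diag_act m \<rho> t w) \<alpha> i = act m \<rho> t (lin_comb n w \<alpha>) i" .
qed

lemma invariant_lin_comb:
  assumes "f \<in> invariants_V r m \<rho>"
  shows "(\<lambda>w. f (lin_comb n w \<alpha>)) \<in> invariants r m \<rho> n"
proof -
  have "polyfun {..<m} f" using assms by (simp add: invariants_V_def)
  then have "polyfun (dsum_index n m) (\<lambda>w. f (lin_comb n w \<alpha>))"
    by (rule polyfun_compose)
      (intro polyfun_sum polyfun_mult polyfun_const polyfun_var; simp add: dsum_index_def)
  then show ?thesis
    using assms by (simp add: invariants_def invariants_V_def diag_act_lin_comb)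
qed

lemma nullcone_subset_pol_nullcone:
  fixes \<rho> :: "(nat \<Rightarrow> 'k::field_char_0) \<Rightarrow> nat \<Rightarrow> nat \<Rightarrow> 'k"
  shows "nullcone r m \<rho> n \<subseteq> pol_nullcone r m \<rho> n"
proof
  fix w assume w: "w \<in> nullcone r m \<rho> n"
  then have F: "F w = F (\<lambda>_. 0)" if "F \<in> invariants r m \<rho> n" for F
    using that unfolding nullcone_def by blast
  have "f (lin_comb n w \<alpha>) = f (\<lambda>_. 0)" if "f \<in> invariants_V r m \<rho>" for f \<alpha>
    using F[OF invariant_lin_comb[OF that]] by simp
  with w show "w \<in> pol_nullcone r m \<rho> n"
    unfolding pol_nullcone_iff nullcone_def by simp
qed

text \<open>A a is the projection of V onto the weight space of the character a: rho t is the sum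
  of the torus_char r a t * A a, and every row of A a is a linear form of weight a.\<close>
locale weight_decomposition =
  fixes r m :: nat and \<rho> :: "(nat \<Rightarrow> 'k::field_char_0) \<Rightarrow> nat \<Rightarrow> nat \<Rightarrow> 'k"
    and S :: "(nat \<Rightarrow> int) set" and A :: "(nat \<Rightarrow> int) \<Rightarrow> nat \<Rightarrow> nat \<Rightarrow> 'k"
  assumes finite_weights: "finite S"
    and weights_support: "a \<in> S \<Longrightarrow> r \<le> i \<Longrightarrow> a i = 0"
    and rep_eq_weight_sum:
      "t \<in> torus r \<Longrightarrow> i < m \<Longrightarrow> j < m \<Longrightarrow> \<rho> t i j = (\<Sum>a\<in>S. torus_char r a t * A a i j)"
    and weight_proj_equivariant: "a \<in> S \<Longrightarrow> t \<in> torus r \<Longrightarrow> i < m \<Longrightarrow> l < m \<Longrightarrow>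
      (\<Sum>j<m. A a i j * \<rho> t j l) = torus_char r a t * A a i l"

lemma rational_rep_weight_decomposition:
  fixes \<rho> :: "(nat \<Rightarrow> 'k::field_char_0) \<Rightarrow> nat \<Rightarrow> nat \<Rightarrow> 'k"
  assumes rep: "rational_rep r m \<rho>"
  obtains S A where "weight_decomposition r m \<rho> S A"
proof -
  have "regular_on_torus r ((\<lambda>(i, j) t. \<rho> t i j) x)" if "x \<in> {..<m} \<times> {..<m}" for x
    using rep that unfolding rational_rep_def by auto
  then obtain S c where S: "finite S" "\<And>a i. a \<in> S \<Longrightarrow> r \<le> i \<Longrightarrow> a i = 0"
    and c: "\<And>x t. x \<in> {..<m} \<times> {..<m} \<Longrightarrow> t \<in> torus r \<Longrightarrow>
      (\<lambda>(i, j) t. \<rho> t i j) x t = (\<Sum>a\<in>S. c x a * torus_char r a t)"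
    by (rule regular_on_torus_common_support[rotated]) auto
  define A where "A a i j = c (i, j) a" for a i j
  have expand: "\<rho> t i j = (\<Sum>a\<in>S. torus_char r a t * A a i j)" if "t \<in> torus r" "i < m" "j < m" for t i j
    using c[of "(i, j)" t] that by (simp add: A_def mult.commute)
  have equivariant: "(\<Sum>j<m. A a i j * \<rho> t j l) = torus_char r a t * A a i l"
    if a: "a \<in> S" and t: "t \<in> torus r" and il: "i < m" "l < m" for a t i l
  proof -
    define d where "d b = torus_char r b t * A b i l - (\<Sum>j<m. A b i j * \<rho> t j l)" for b
    \<comment> \<open>expand both sides of rho (s t) = rho s rho t in the characters of s\<close>
    have indep: "(\<Sum>b\<in>S. d b * torus_char r b s) = 0" if s: "s \<in> torus r" for s
    proof -
      have "(\<Sum>b\<in>S. torus_char r b s * torus_char r b t * A b i l) = \<rho> (\<lambda>l. s l * t l) i l"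
        using expand[OF torus_mult[OF s t] il] by (simp add: torus_char_mult)
      also have "\<dots> = (\<Sum>j<m. \<rho> s i j * \<rho> t j l)"
        using rep s t il unfolding rational_rep_def by blast
      also have "\<dots> = (\<Sum>b\<in>S. torus_char r b s * (\<Sum>j<m. A b i j * \<rho> t j l))"
        using expand[OF s] il
        by (simp add: sum_distrib_right sum_distrib_left mult.assoc sum.swap[of _ "{..<m}"])
      finally show ?thesis
        by (simp add: d_def algebra_simps sum_subtractf)
    qed
    have "d a = 0"
      by (rule torus_chars_independent[where c = d and a = a, OF S(1)]) (use S(2) indep a in auto)
    then show ?thesis by (simp add: d_def)
  qed
  have "weight_decomposition r m \<rho> S A"
    unfolding weight_decomposition_def using S expand equivariant by blast
  then show ?thesis by (rule that)
qed

context weight_decomposition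
begin

definition weight_form :: "(nat \<Rightarrow> int) \<Rightarrow> nat \<Rightarrow> (nat \<Rightarrow> 'k) \<Rightarrow> 'k" where
  "weight_form a i v = (\<Sum>j<m. A a i j * v j)"

definition weights_of :: "nat \<Rightarrow> (nat \<times> nat \<Rightarrow> 'k) \<Rightarrow> (nat \<Rightarrow> int) set" where
  "weights_of n w = {a\<in>S. \<exists>p<n. \<exists>i<m. weight_form a i (\<lambda>j. w (p, j)) \<noteq> 0}"

lemma finite_weights_of: "finite (weights_of n w)"
  using finite_weights by (simp add: weights_of_def)

lemma weight_form_act:
  assumes "a \<in> S" "i < m" "t \<in> torus r"
  shows "weight_form a i (act m \<rho> t v) = torus_char r a t * weight_form a i v"
proof -
  have "weight_form a i (act m \<rho> t v) = (\<Sum>j<m. \<Sum>l<m. A a i j * \<rho> t j l * v l)"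
    by (simp add: weight_form_def act_def sum_distrib_left mult.assoc)
  also have "\<dots> = (\<Sum>l<m. (\<Sum>j<m. A a i j * \<rho> t j l) * v l)"
    by (subst sum.swap) (simp add: sum_distrib_right)
  also have "\<dots> = torus_char r a t * weight_form a i v"
    using assms by (simp add: weight_proj_equivariant weight_form_def sum_distrib_left mult.assoc)
  finally show ?thesis .
qed

lemma diag_act_weight_expansion:
  assumes "t \<in> torus r" "i < m" "p < n"
  shows "diag_act m \<rho> t w (p, i) = (\<Sum>a\<in>weights_of n w. torus_char r a t * weight_form a i (\<lambda>j. w (p, j)))"
proof -
  have "diag_act m \<rho> t w (p, i) = (\<Sum>j<m. \<Sum>a\<in>S. torus_char r a t * A a i j * w (p, j))"
    using assms by (simp add: diag_act_def rep_eq_weight_sum sum_distrib_right)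
  also have "\<dots> = (\<Sum>a\<in>S. torus_char r a t * weight_form a i (\<lambda>j. w (p, j)))"
    by (subst sum.swap) (simp add: weight_form_def sum_distrib_left mult.assoc)
  also have "\<dots> = (\<Sum>a\<in>weights_of n w. torus_char r a t * weight_form a i (\<lambda>j. w (p, j)))"
    using finite_weights assms(2,3) by (intro sum.mono_neutral_right) (auto simp: weights_of_def)
  finally show ?thesis .
qed

lemma weight_relation_if_not_null:
  assumes F: "F \<in> invariants r m \<rho> n" and ne: "F w \<noteq> F (\<lambda>_. 0)"
  obtains e where "(\<lambda>i. \<Sum>a\<in>weights_of n w. int (e a) * a i) = (\<lambda>_. 0)"
    and "\<exists>a\<in>weights_of n w. e a \<noteq> 0"
proof -
  let ?W = "weights_of n w"
  define \<phi> where "\<phi> z = F (\<lambda>q. \<Sum>a\<in>?W. z a * weight_form a (snd q) (\<lambda>j. w (fst q, j)))"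
    for z :: "(nat \<Rightarrow> int) \<Rightarrow> 'k"
  define \<mu> where "\<mu> e = (\<lambda>i. \<Sum>a\<in>?W. int (e a) * a i)" for e :: "(nat \<Rightarrow> int) \<Rightarrow> nat"
  have pF: "polyfun (dsum_index n m) F" using F by (simp add: invariants_def)
  then have "polyfun ?W \<phi>"
    unfolding \<phi>_def using finite_weights_of
    by (intro polyfun_compose[OF pF] polyfun_sum polyfun_mult polyfun_var polyfun_const)
  then obtain E c where E: "finite E" "\<And>z. \<phi> z = (\<Sum>e\<in>E. c e * (\<Prod>a\<in>?W. z a ^ e a))"
    unfolding polyfun_def by blast
  have "F w = (\<Sum>e\<in>E. c e * torus_char r (\<mu> e) t)" if t: "t \<in> torus r" for t
  proof -
    have "F w = F (diag_act m \<rho> t w)" using F t by (simp add: invariants_def)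
    also have "\<dots> = \<phi> (\<lambda>a. torus_char r a t)"
      unfolding \<phi>_def by (rule polyfun_cong[OF pF]) (auto simp: dsum_index_def diag_act_weight_expansion t)
    also have "\<dots> = (\<Sum>e\<in>E. c e * torus_char r (\<mu> e) t)"
      by (simp add: E(2) torus_char_prod_power[OF t finite_weights_of] \<mu>_def)
    finally show ?thesis .
  qed
  moreover have "\<mu> e i = 0" if "r \<le> i" for e i
    using weights_support \<open>r \<le> i\<close> unfolding \<mu>_def weights_of_def by (auto intro: sum.neutral)
  ultimately have "F w = (\<Sum>e\<in>{e\<in>E. \<mu> e = (\<lambda>_. 0)}. c e)"
    using torus_char_sum_const_coeffs[OF E(1), of r \<mu> c "F w" "\<lambda>_. 0"] by simp
  moreover have "F (\<lambda>_. 0) = (\<Sum>e\<in>{e\<in>E. \<forall>a\<in>?W. e a = 0}. c e)"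
    using polyfun_at_zero[OF finite_weights_of E(2) E(1)] by (simp add: \<phi>_def)
  ultimately have "{e\<in>E. \<mu> e = (\<lambda>_. 0)} \<noteq> {e\<in>E. \<forall>a\<in>?W. e a = 0}"
    using ne by auto
  moreover have "\<mu> e = (\<lambda>_. 0)" if "\<forall>a\<in>?W. e a = 0" for e
    using that by (simp add: \<mu>_def)
  ultimately obtain e where "\<mu> e = (\<lambda>_. 0)" "\<exists>a\<in>?W. e a \<noteq> 0"
    by blast
  then show ?thesis using that unfolding \<mu>_def by blast
qed

lemma weight_form_lin_comb:
  "weight_form a i (lin_comb n w \<alpha>) = (\<Sum>j<n. \<alpha> j * weight_form a i (\<lambda>l. w (j, l)))"
proof -
  have "weight_form a i (lin_comb n w \<alpha>) = (\<Sum>l<m. \<Sum>j<n. \<alpha> j * (A a i l * w (j, l)))"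
    by (simp add: weight_form_def sum_distrib_left algebra_simps)
  also have "\<dots> = (\<Sum>j<n. \<alpha> j * weight_form a i (\<lambda>l. w (j, l)))"
    by (subst sum.swap) (simp add: weight_form_def sum_distrib_left)
  finally show ?thesis .
qed

lemma weight_relation_invariant:
  assumes "T \<subseteq> S" and "\<And>a. a \<in> T \<Longrightarrow> ix a < m"
    and rel: "(\<lambda>i. \<Sum>a\<in>T. int (e a) * a i) = (\<lambda>_. 0)"
  shows "(\<lambda>v. \<Prod>a\<in>T. weight_form a (ix a) v ^ e a) \<in> invariants_V r m \<rho>"
proof -
  have T: "finite T" using assms(1) finite_weights by (rule finite_subset)
  have "polyfun {..<m} (\<lambda>v. \<Prod>a\<in>T. weight_form a (ix a) v ^ e a)"
    unfolding weight_form_def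
    by (intro polyfun_prod polyfun_power polyfun_sum polyfun_mult polyfun_const polyfun_var) auto
  moreover have "(\<Prod>a\<in>T. weight_form a (ix a) (act m \<rho> t v) ^ e a) = (\<Prod>a\<in>T. weight_form a (ix a) v ^ e a)"
    if t: "t \<in> torus r" for t v
  proof -
    have "(\<Prod>a\<in>T. weight_form a (ix a) (act m \<rho> t v) ^ e a) =
        (\<Prod>a\<in>T. torus_char r a t ^ e a) * (\<Prod>a\<in>T. weight_form a (ix a) v ^ e a)"
      using assms(1,2) t by (simp add: weight_form_act subsetD power_mult_distrib prod.distrib)
    also have "(\<Prod>a\<in>T. torus_char r a t ^ e a) = 1"
      unfolding torus_char_prod_power[OF t T] rel by (simp add: torus_char_def)
    finally show ?thesis by simp
  qed
  ultimately show ?thesis by (simp add: invariants_V_def)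
qed

lemma pol_nullcone_subset_nullcone: "pol_nullcone r m \<rho> n \<subseteq> nullcone r m \<rho> n"
proof
  fix w assume w: "w \<in> pol_nullcone r m \<rho> n"
  let ?W = "weights_of n w"
  have "F w = F (\<lambda>_. 0)" if F: "F \<in> invariants r m \<rho> n" for F
  proof (rule ccontr)
    assume "F w \<noteq> F (\<lambda>_. 0)"
    then obtain e where rel: "(\<lambda>i. \<Sum>a\<in>?W. int (e a) * a i) = (\<lambda>_. 0)"
      and nontrivial: "\<exists>a\<in>?W. e a \<noteq> 0"
      by (rule weight_relation_if_not_null[OF F])
    have "\<forall>a\<in>?W. \<exists>i<m. \<exists>p<n. weight_form a i (\<lambda>j. w (p, j)) \<noteq> 0"
      unfolding weights_of_def by blast
    then obtain ix where ix: "\<And>a. a \<in> ?W \<Longrightarrow> ix a < m \<and> (\<exists>p<n. weight_form a (ix a) (\<lambda>j. w (p, j)) \<noteq> 0)"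
      by metis
    define f where "f v = (\<Prod>a\<in>?W. weight_form a (ix a) v ^ e a)" for v
    have "f \<in> invariants_V r m \<rho>"
      unfolding f_def using ix rel by (intro weight_relation_invariant) (auto simp: weights_of_def)
    then have "f (lin_comb n w \<alpha>) = f (\<lambda>_. 0)" for \<alpha>
      using w unfolding pol_nullcone_iff by blast
    moreover have "f (\<lambda>_. 0) = 0"
      using nontrivial finite_weights_of by (simp add: f_def weight_form_def prod_zero_iff)
    moreover obtain s where "(\<Prod>a\<in>?W. (\<Sum>p<n. weight_form a (ix a) (\<lambda>j. w (p, j)) * s ^ p) ^ e a) \<noteq> 0"
      by (rule poly_prod_power_nonzero_somewhere[OF finite_weights_of,
            where \<beta> = "\<lambda>a p. weight_form a (ix a) (\<lambda>j. w (p, j))"]) (use ix in blast)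
    ultimately show False
      by (simp add: f_def weight_form_lin_comb mult.commute)
  qed
  with w show "w \<in> nullcone r m \<rho> n"
    unfolding pol_nullcone_iff nullcone_def by blast
qed

end

lemma pol_ind_eq_infinity:
  assumes "\<And>n. n \<ge> 1 \<Longrightarrow> nullcone r m \<rho> n = pol_nullcone r m \<rho> n"
  shows "pol_ind r m \<rho> = \<infinity>"
proof -
  have "{enat n | n. n \<ge> 1 \<and> nullcone r m \<rho> n = pol_nullcone r m \<rho> n} = enat ` {1..}"
    using assms by auto
  moreover have "infinite (enat ` {1..})"
    using finite_imageD[of enat "{1..}"] infinite_Ici by (auto simp: inj_on_def)
  ultimately show ?thesis
    unfolding pol_ind_def by (simp add: Sup_enat_def)
qed

lemma nullcone_eq_pol_nullcone:
  fixes \<rho> :: "(nat \<Rightarrow> 'k::field_char_0) \<Rightarrow> nat \<Rightarrow> nat \<Rightarrow> 'k"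
  assumes "rational_rep r m \<rho>"
  shows "nullcone r m \<rho> n = pol_nullcone r m \<rho> n"
proof -
  obtain S A where "weight_decomposition r m \<rho> S A"
    using rational_rep_weight_decomposition[OF assms] .
  then show ?thesis
    using weight_decomposition.pol_nullcone_subset_nullcone nullcone_subset_pol_nullcone by blast
qed

theorem theorem3p10:
  fixes r m :: nat and \<rho> :: "(nat \<Rightarrow> 'k::field_char_0) \<Rightarrow> nat \<Rightarrow> nat \<Rightarrow> 'k"
  assumes "alg_closed TYPE('k)"
    and "rational_rep r m \<rho>"
  shows "pol_ind r m \<rho> = \<infinity>"
  using nullcone_eq_pol_nullcone[OF assms(2)] by (rule pol_ind_eq_infinity)

end
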